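(* Let $(Y,\lambda)\in\{-1,1\}\times\{-1,1\}^m$ follow the Ising model $$P(Y,\lambda)=\frac1Z\exp\Big(\theta_Y Y+\sum_i\theta_i\lambda_iY+\sum_{(i,j)\in E_\lambda}\theta_{ij}\lambda_i\lambda_j\Big),$$ where $E_\lambda$ is a set of unordered pairs of distinct sources. Then for every source $i$, with $a_i=\mathbb E[\lambda_iY]$, $$P(\lambda_i=1\mid Y=1)=P(\lambda_i=-1\mid Y=-1)=\frac{1+a_i}{2},\qquad P(\lambda_i=-1\mid Y=1)=P(\lambda_i=1\mid Y=-1)=\frac{1-a_i}{2}.$$
   Context: $Z$ is the normalizing constant. *)

theory Defs
  imports Complex_Main
begin

text \<open>Dependency edges E are unordered pairs of distinct
  sources, encoded as ordered pairs (i,j) with i < j < m; theta_E gives the weight of each edge.\<close>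

definition ising_space :: "nat \<Rightarrow> (int \<times> int list) set" where
  "ising_space m = {-1, 1} \<times> {l. length l = m \<and> set l \<subseteq> {-1, 1}}"

definition ising_weight ::
  "nat \<Rightarrow> real \<Rightarrow> (nat \<Rightarrow> real) \<Rightarrow> (nat \<times> nat \<Rightarrow> real) \<Rightarrow> (nat \<times> nat) set
    \<Rightarrow> int \<times> int list \<Rightarrow> real" where
  "ising_weight m thY th thE E w =
     (case w of (y, l) \<Rightarrow>
       exp (thY * of_int y
            + (\<Sum>i<m. th i * of_int (l ! i) * of_int y)
            + (\<Sum>p\<in>E. thE p * of_int (l ! fst p) * of_int (l ! snd p))))"

definition ising_Z ::
  "nat \<Rightarrow> real \<Rightarrow> (nat \<Rightarrow> real) \<Rightarrow> (nat \<times> nat \<Rightarrow> real) \<Rightarrow> (nat \<times> nat) set \<Rightarrow> real" where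
  "ising_Z m thY th thE E = (\<Sum>w\<in>ising_space m. ising_weight m thY th thE E w)"

definition ising_prob ::
  "nat \<Rightarrow> real \<Rightarrow> (nat \<Rightarrow> real) \<Rightarrow> (nat \<times> nat \<Rightarrow> real) \<Rightarrow> (nat \<times> nat) set
    \<Rightarrow> (int \<times> int list) set \<Rightarrow> real" where
  "ising_prob m thY th thE E A =
     (\<Sum>w\<in>ising_space m \<inter> A. ising_weight m thY th thE E w) / ising_Z m thY th thE E"

definition ising_cond_prob ::
  "nat \<Rightarrow> real \<Rightarrow> (nat \<Rightarrow> real) \<Rightarrow> (nat \<times> nat \<Rightarrow> real) \<Rightarrow> (nat \<times> nat) set
    \<Rightarrow> (int \<times> int list) set \<Rightarrow> (int \<times> int list) set \<Rightarrow> real" where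
  "ising_cond_prob m thY th thE E A B =
     ising_prob m thY th thE E (A \<inter> B) / ising_prob m thY th thE E B"

definition ising_expect ::
  "nat \<Rightarrow> real \<Rightarrow> (nat \<Rightarrow> real) \<Rightarrow> (nat \<times> nat \<Rightarrow> real) \<Rightarrow> (nat \<times> nat) set
    \<Rightarrow> (int \<times> int list \<Rightarrow> real) \<Rightarrow> real" where
  "ising_expect m thY th thE E f =
     (\<Sum>w\<in>ising_space m. f w * ising_weight m thY th thE E w) / ising_Z m thY th thE E"

end

theory Submission
  imports Defs
begin

text \<open>Every interaction term except \<open>\<theta>\<^sub>Y Y\<close> is a product of two spins, so flipping all
  spins multiplies the weight of \<open>(Y, \<lambda>)\<close> by \<open>exp (-2 \<theta>\<^sub>Y Y)\<close>. Hence the joint weights of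
  \<open>(Y, \<lambda>\<^sub>i) = (1, s)\<close> and \<open>(-1, -s)\<close> differ by the same factor \<open>c\<close> for both values of \<open>s\<close>;
  writing \<open>p, q\<close> for the weights of \<open>(1, 1), (1, -1)\<close> we get \<open>Z = (1 + c)(p + q)\<close>,
  \<open>a Z = (1 + c)(p - q)\<close>, and each of the four conditional probabilities is
  \<open>p / (p + q)\<close> or \<open>q / (p + q)\<close>.\<close>

definition ising_mass ::
  "nat \<Rightarrow> real \<Rightarrow> (nat \<Rightarrow> real) \<Rightarrow> (nat \<times> nat \<Rightarrow> real) \<Rightarrow> (nat \<times> nat) set
    \<Rightarrow> (int \<times> int list) set \<Rightarrow> real" where
  "ising_mass m thY th thE E A = (\<Sum>w\<in>ising_space m \<inter> A. ising_weight m thY th thE E w)"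

definition ising_joint_mass ::
  "nat \<Rightarrow> real \<Rightarrow> (nat \<Rightarrow> real) \<Rightarrow> (nat \<times> nat \<Rightarrow> real) \<Rightarrow> (nat \<times> nat) set
    \<Rightarrow> nat \<Rightarrow> int \<Rightarrow> int \<Rightarrow> real" where
  "ising_joint_mass m thY th thE E i y s
     = ising_mass m thY th thE E ({w. snd w ! i = s} \<inter> {w. fst w = y})"

definition spin_flip :: "int \<times> int list \<Rightarrow> int \<times> int list" where
  "spin_flip w = (- fst w, map uminus (snd w))"

lemma finite_ising_space: "finite (ising_space m)"
proof -
  have "finite {l. set l \<subseteq> {-1, 1::int} \<and> length l = m}"
    by (rule finite_lists_length_eq) simp
  then show ?thesis
    unfolding ising_space_def by (simp add: conj_commute)
qed

lemma ising_spaceD: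
  assumes "w \<in> ising_space m"
  shows "fst w = 1 \<or> fst w = -1" and "i < m \<Longrightarrow> snd w ! i = 1 \<or> snd w ! i = -1"
proof -
  show "fst w = 1 \<or> fst w = -1"
    using assms by (auto simp: ising_space_def)
  show "snd w ! i = 1 \<or> snd w ! i = -1" if "i < m"
  proof -
    have "snd w ! i \<in> set (snd w)" and "set (snd w) \<subseteq> {-1, 1}"
      using assms that by (auto simp: ising_space_def)
    then show ?thesis by blast
  qed
qed

lemma spin_flip_in_ising_space: "w \<in> ising_space m \<Longrightarrow> spin_flip w \<in> ising_space m"
  by (auto simp: ising_space_def spin_flip_def)

lemma spin_flip_spin_flip [simp]: "spin_flip (spin_flip w) = w"
  by (simp add: spin_flip_def comp_def)

lemma ising_weight_pos: "ising_weight m thY th thE E w > 0"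
  by (simp add: ising_weight_def split: prod.splits)

lemma ising_weight_spin_flip:
  assumes "E \<subseteq> {..<m} \<times> {..<m}" and "length l = m"
  shows "ising_weight m thY th thE E (spin_flip (y, l))
       = exp (-2 * thY * of_int y) * ising_weight m thY th thE E (y, l)"
proof -
  have "(\<Sum>i<m. th i * of_int (map uminus l ! i) * of_int (- y))
      = (\<Sum>i<m. th i * of_int (l ! i) * of_int y)"
    using assms(2) by (intro sum.cong) auto
  moreover have "(\<Sum>p\<in>E. thE p * of_int (map uminus l ! fst p) * of_int (map uminus l ! snd p))
      = (\<Sum>p\<in>E. thE p * of_int (l ! fst p) * of_int (l ! snd p))"
    using assms by (intro sum.cong) auto
  ultimately show ?thesis
    by (simp add: ising_weight_def spin_flip_def mult_exp_exp algebra_simps)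
qed

lemma ising_mass_cong:
  "ising_space m \<inter> A = ising_space m \<inter> B \<Longrightarrow> ising_mass m thY th thE E A = ising_mass m thY th thE E B"
  by (simp add: ising_mass_def)

lemma ising_mass_pos:
  "w \<in> ising_space m \<inter> A \<Longrightarrow> ising_mass m thY th thE E A > 0"
  unfolding ising_mass_def
  by (rule sum_pos2[where i = w]) (auto simp: finite_ising_space ising_weight_pos less_imp_le)

lemma ising_Z_eq_ising_mass: "ising_Z m thY th thE E = ising_mass m thY th thE E UNIV"
  by (simp add: ising_Z_def ising_mass_def)

lemma ising_Z_pos: "ising_Z m thY th thE E > 0"
  unfolding ising_Z_eq_ising_mass
  by (rule ising_mass_pos[of "(1, replicate m 1)"]) (auto simp: ising_space_def)

lemma ising_cond_prob_eq_mass_ratio: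
  "ising_cond_prob m thY th thE E A B
     = ising_mass m thY th thE E (A \<inter> B) / ising_mass m thY th thE E B"
  using ising_Z_pos[of m thY th thE E]
  by (simp add: ising_cond_prob_def ising_prob_def flip: ising_mass_def)

lemma ising_mass_split:
  assumes "ising_space m \<inter> A \<subseteq> B \<union> C" and "B \<inter> C = {}"
  shows "ising_mass m thY th thE E A
       = ising_mass m thY th thE E (B \<inter> A) + ising_mass m thY th thE E (C \<inter> A)"
proof -
  have eq: "ising_space m \<inter> A = (ising_space m \<inter> (B \<inter> A)) \<union> (ising_space m \<inter> (C \<inter> A))"
    using assms(1) by blast
  show ?thesis
    unfolding ising_mass_def eq
    by (rule sum.union_disjoint) (use assms(2) in \<open>auto simp: finite_ising_space\<close>)
qed

lemma ising_mass_spin_flip: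
  assumes "E \<subseteq> {..<m} \<times> {..<m}" and "A \<subseteq> {w. fst w = y}"
  shows "ising_mass m thY th thE E (spin_flip -` A)
       = exp (-2 * thY * of_int y) * ising_mass m thY th thE E A"
proof -
  have "ising_mass m thY th thE E (spin_flip -` A)
      = (\<Sum>w\<in>ising_space m \<inter> A. ising_weight m thY th thE E (spin_flip w))"
    unfolding ising_mass_def
    by (rule sum.reindex_bij_witness[of _ spin_flip spin_flip, symmetric])
      (auto intro: spin_flip_in_ising_space)
  also have "\<dots> = (\<Sum>w\<in>ising_space m \<inter> A. exp (-2 * thY * of_int y) * ising_weight m thY th thE E w)"
    using assms ising_weight_spin_flip[OF assms(1)]
    by (intro sum.cong) (auto simp: ising_space_def)
  finally show ?thesis
    by (simp add: ising_mass_def sum_distrib_left)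
qed

lemma ising_joint_mass_spin_flip:
  assumes "E \<subseteq> {..<m} \<times> {..<m}" and "i < m"
  shows "ising_joint_mass m thY th thE E i (- y) (- s)
       = exp (-2 * thY * of_int y) * ising_joint_mass m thY th thE E i y s"
proof -
  have "ising_space m \<inter> ({w. snd w ! i = - s} \<inter> {w. fst w = - y})
      = ising_space m \<inter> spin_flip -` ({w. snd w ! i = s} \<inter> {w. fst w = y})"
    using assms(2) by (auto simp: ising_space_def spin_flip_def)
  then have "ising_joint_mass m thY th thE E i (- y) (- s)
      = ising_mass m thY th thE E (spin_flip -` ({w. snd w ! i = s} \<inter> {w. fst w = y}))"
    unfolding ising_joint_mass_def by (rule ising_mass_cong)
  also have "\<dots> = exp (-2 * thY * of_int y) * ising_joint_mass m thY th thE E i y s"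
    unfolding ising_joint_mass_def by (rule ising_mass_spin_flip[OF assms(1)]) blast
  finally show ?thesis .
qed

lemma ising_joint_mass_pos:
  assumes "i < m" and "y \<in> {-1, 1}" and "s \<in> {-1, 1}"
  shows "ising_joint_mass m thY th thE E i y s > 0"
  unfolding ising_joint_mass_def using assms
  by (intro ising_mass_pos[of "(y, replicate m s)"]) (auto simp: ising_space_def)

lemma ising_mass_label:
  assumes "i < m"
  shows "ising_mass m thY th thE E {w. fst w = y}
       = ising_joint_mass m thY th thE E i y 1 + ising_joint_mass m thY th thE E i y (-1)"
  unfolding ising_joint_mass_def
  by (rule ising_mass_split) (auto dest: ising_spaceD(2)[OF _ assms])

lemma ising_cond_prob_spin_given_label:
  assumes "i < m"
  shows "ising_cond_prob m thY th thE E {w. snd w ! i = s} {w. fst w = y}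
       = ising_joint_mass m thY th thE E i y s
         / (ising_joint_mass m thY th thE E i y 1 + ising_joint_mass m thY th thE E i y (-1))"
  by (simp add: ising_cond_prob_eq_mass_ratio ising_mass_label[OF assms]
      flip: ising_joint_mass_def)

lemma ising_Z_eq_sum_joint_mass:
  assumes "i < m"
  shows "ising_Z m thY th thE E
       = ising_joint_mass m thY th thE E i 1 1 + ising_joint_mass m thY th thE E i 1 (-1)
       + ising_joint_mass m thY th thE E i (-1) 1 + ising_joint_mass m thY th thE E i (-1) (-1)"
proof -
  have "ising_Z m thY th thE E
      = ising_mass m thY th thE E {w. fst w = 1} + ising_mass m thY th thE E {w. fst w = -1}"
    unfolding ising_Z_eq_ising_mass
    by (subst ising_mass_split[where B = "{w. fst w = 1}" and C = "{w. fst w = -1}"])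
      (auto dest: ising_spaceD(1))
  then show ?thesis
    by (simp add: ising_mass_label[OF assms])
qed

lemma ising_expect_spin_product:
  assumes "i < m"
  shows "ising_expect m thY th thE E (\<lambda>(y, l). of_int (l ! i) * of_int y)
       = (ising_joint_mass m thY th thE E i 1 1 - ising_joint_mass m thY th thE E i 1 (-1)
          - ising_joint_mass m thY th thE E i (-1) 1 + ising_joint_mass m thY th thE E i (-1) (-1))
         / ising_Z m thY th thE E"
proof -
  let ?W = "ising_weight m thY th thE E"
  let ?ind = "\<lambda>y s w. if w \<in> {w. snd w ! i = s} \<inter> {w. fst w = y} then ?W w else 0"
  have joint_eq: "ising_joint_mass m thY th thE E i y s = (\<Sum>w\<in>ising_space m. ?ind y s w)" for y s
    unfolding ising_joint_mass_def ising_mass_def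
    by (simp add: sum.inter_restrict finite_ising_space)
  have "(case w of (y, l) \<Rightarrow> of_int (l ! i) * of_int y) * ?W w
      = ?ind 1 1 w - ?ind 1 (-1) w - ?ind (-1) 1 w + ?ind (-1) (-1) w"
    if "w \<in> ising_space m" for w
    using ising_spaceD[OF that] assms by (cases w) auto
  then show ?thesis
    by (simp add: ising_expect_def joint_eq sum.distrib sum_subtractf)
qed

theorem lemma2:
  fixes m :: nat and thY :: real and th :: "nat \<Rightarrow> real"
    and thE :: "nat \<times> nat \<Rightarrow> real" and E :: "(nat \<times> nat) set" and i :: nat
  assumes "E \<subseteq> {(j, k). j < k \<and> k < m}"
    and "i < m"
  defines "a \<equiv> ising_expect m thY th thE E (\<lambda>(y, l). of_int (l ! i) * of_int y)"
  shows "ising_cond_prob m thY th thE E {w. snd w ! i = 1} {w. fst w = 1} = (1 + a) / 2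
    \<and> ising_cond_prob m thY th thE E {w. snd w ! i = -1} {w. fst w = -1} = (1 + a) / 2
    \<and> ising_cond_prob m thY th thE E {w. snd w ! i = -1} {w. fst w = 1} = (1 - a) / 2
    \<and> ising_cond_prob m thY th thE E {w. snd w ! i = 1} {w. fst w = -1} = (1 - a) / 2"
proof -
  have edges: "E \<subseteq> {..<m} \<times> {..<m}"
    using assms(1) by auto
  define J where "J = ising_joint_mass m thY th thE E i"
  define c where "c = exp (-2 * thY)"
  have flip: "J (-1) (-s) = c * J 1 s" for s
    using ising_joint_mass_spin_flip[OF edges assms(2), where y = 1] by (simp add: J_def c_def)
  have pos: "J 1 1 > 0" "J 1 (-1) > 0" "c > 0"
    using ising_joint_mass_pos[OF assms(2)] by (simp_all add: J_def c_def)
  have "a = ((1 + c) * (J 1 1 - J 1 (-1))) / ((1 + c) * (J 1 1 + J 1 (-1)))"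
    using flip[of 1] flip[of "-1"]
    unfolding a_def ising_expect_spin_product[OF assms(2)] ising_Z_eq_sum_joint_mass[OF assms(2)]
      J_def[symmetric]
    by (simp add: algebra_simps)
  then have "a = (J 1 1 - J 1 (-1)) / (J 1 1 + J 1 (-1))"
    using pos(3) by simp
  then show ?thesis
    using pos flip[of 1] flip[of "-1"]
    by (simp add: ising_cond_prob_spin_given_label[OF assms(2)] flip: J_def distrib_left)
      (simp add: field_simps)
qed

end
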